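(* Let $R$ be a finite Blaschke product. Then $X_R$ is a full Hilbert bimodule over $A=C(\mathbb{T})$ without completion (i.e. $X_R=C(\mathbb{T})$ is already complete with respect to the norm $\|\xi\|_2=\|\langle\xi,\xi\rangle_A\|^{1/2}$, and the closed span of $\langle X_R,X_R\rangle_A$ is $A$). The left action $\phi:A\to\mathcal{L}(X_R)$ is unital and faithful.
   Context: A finite Blaschke product is $R(z)=\lambda\prod_{k=1}^n\frac{z-z_k}{1-\overline{z_k}z}$ with $n\ge1$, $\lambda\in\mathbb{T}$, $z_k$ in the open unit disk. The Aleksandrov operator of $R$ is $A_R(a)(w)=\sum_{z\in R^{-1}(w)}\frac{1}{|R'(z)|}a(z)$ for $a\in C(\mathbb{T})$, $w\in\mathbb{T}$. Let $A=C(\mathbb{T})$ and $X_R=C(\mathbb{T})$ as an $A$-$A$ bimodule via $(a\cdot\xi\cdot b)(z)=a(z)\xi(z)b(R(z))$, with $A$-valued inner product $\langle\xi,\eta\rangle_A=A_R(\overline{\xi}\eta)$; $\phi(a)\xi=a\cdot\xi$ is the left action and $\mathcal{L}(X_R)$ the adjointable operators. *)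

theory Defs
  imports "HOL-Analysis.Analysis"
begin

abbreviation circle :: "complex set" where
  "circle \<equiv> sphere 0 1"

text \<open>Elements of C(T) are represented by functions complex => complex,
  continuous on T; only their values on T matter.\<close>
definition contT :: "(complex \<Rightarrow> complex) \<Rightarrow> bool" where
  "contT f \<longleftrightarrow> continuous_on circle f"

definition blaschke :: "complex \<Rightarrow> complex list \<Rightarrow> complex \<Rightarrow> complex" where
  "blaschke lam zs z = lam * (\<Prod>k<length zs. (z - zs ! k) / (1 - cnj (zs ! k) * z))"

definition is_finite_blaschke :: "(complex \<Rightarrow> complex) \<Rightarrow> bool" where
  "is_finite_blaschke R \<longleftrightarrow>
     (\<exists>lam zs. zs \<noteq> [] \<and> cmod lam = 1 \<and> (\<forall>a\<in>set zs. cmod a < 1) \<and> R = blaschke lam zs)"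

definition aleksandrov :: "(complex \<Rightarrow> complex) \<Rightarrow> (complex \<Rightarrow> complex) \<Rightarrow> complex \<Rightarrow> complex" where
  "aleksandrov R a w = (\<Sum>z\<in>{z\<in>circle. R z = w}. a z / complex_of_real (cmod (deriv R z)))"

definition ipX :: "(complex \<Rightarrow> complex) \<Rightarrow> (complex \<Rightarrow> complex) \<Rightarrow> (complex \<Rightarrow> complex) \<Rightarrow> complex \<Rightarrow> complex" where
  "ipX R \<xi> \<eta> = aleksandrov R (\<lambda>z. cnj (\<xi> z) * \<eta> z)"

definition lact :: "(complex \<Rightarrow> complex) \<Rightarrow> (complex \<Rightarrow> complex) \<Rightarrow> complex \<Rightarrow> complex" where
  "lact a \<xi> = (\<lambda>z. a z * \<xi> z)"

definition ract :: "(complex \<Rightarrow> complex) \<Rightarrow> (complex \<Rightarrow> complex) \<Rightarrow> (complex \<Rightarrow> complex) \<Rightarrow> complex \<Rightarrow> complex" where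
  "ract R \<xi> b = (\<lambda>z. \<xi> z * b (R z))"

definition supT :: "(complex \<Rightarrow> complex) \<Rightarrow> real" where
  "supT f = Sup ((\<lambda>w. cmod (f w)) ` circle)"

definition norm2 :: "(complex \<Rightarrow> complex) \<Rightarrow> (complex \<Rightarrow> complex) \<Rightarrow> real" where
  "norm2 R \<xi> = sqrt (supT (ipX R \<xi> \<xi>))"

end

theory Submission
  imports Defs
begin

text \<open>
  On the circle a finite Blaschke product satisfies \<open>R (cis t) = cis (\<theta> t)\<close> for a lift \<open>\<theta>\<close>
  whose derivative \<open>\<bar>R'(cis t)\<bar>\<close> is a sum of Poisson kernels, hence positive and bounded.
  So \<open>\<theta>\<close> is increasing with \<open>\<theta> (t + 2\<pi>) = \<theta> t + 2\<pi>m\<close>: every point of the circle has exactly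
  \<open>m\<close> preimages, and they depend continuously on it through \<open>\<theta>\<inverse>\<close>. Hence the Aleksandrov
  operator maps \<open>C(T)\<close> into itself, and since \<open>\<bar>R'\<bar>\<close> is bounded above and below, \<open>\<parallel>\<xi>\<parallel>\<^sub>2\<close> is
  equivalent to the sup norm, so completeness is inherited from \<open>C(T)\<close>. Fullness holds because
  \<open>\<langle>1, 1 \<cdot> b\<rangle> = A\<^sub>R(1) b\<close> with \<open>A\<^sub>R(1)\<close> nowhere zero.
\<close>

section \<open>Blaschke factors and Poisson kernels\<close>

definition blaschke_factor :: "complex \<Rightarrow> complex \<Rightarrow> complex" where
  "blaschke_factor a z = (z - a) / (1 - cnj a * z)"

definition poisson_kernel :: "complex \<Rightarrow> complex \<Rightarrow> real" where
  "poisson_kernel a z = (1 - cmod a ^ 2) / cmod (z - a) ^ 2"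

definition poisson_sum :: "complex list \<Rightarrow> complex \<Rightarrow> real" where
  "poisson_sum zs z = (\<Sum>a\<leftarrow>zs. poisson_kernel a z)"

lemma blaschke_Nil: "blaschke lam [] = (\<lambda>z. lam)"
  by (simp add: blaschke_def fun_eq_iff)

lemma blaschke_Cons: "blaschke lam (a # zs) z = blaschke_factor a z * blaschke lam zs z"
  by (simp add: blaschke_def blaschke_factor_def prod.lessThan_Suc_shift ac_simps del: prod.lessThan_Suc)

lemma circle_cnj_mult: "cmod z = 1 \<Longrightarrow> z * cnj z = 1"
  by (metis complex_norm_square mult.commute of_real_1 power_one)

lemma one_minus_cnj_mult_circle: "cmod z = 1 \<Longrightarrow> 1 - cnj a * z = z * cnj (z - a)"
  by (simp add: right_diff_distrib circle_cnj_mult mult.commute)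

lemma one_minus_cnj_mult_nonzero: "cmod z = 1 \<Longrightarrow> cmod a < 1 \<Longrightarrow> 1 - cnj a * z \<noteq> 0"
  by (auto simp: one_minus_cnj_mult_circle)

lemma norm_blaschke_factor_circle:
  assumes "cmod z = 1" "cmod a < 1"
  shows "cmod (blaschke_factor a z) = 1"
  using assms
  by (auto simp: blaschke_factor_def one_minus_cnj_mult_circle norm_divide norm_mult
           simp del: complex_cnj_diff)

lemma blaschke_factor_has_field_derivative:
  assumes "1 - cnj a * z \<noteq> 0"
  shows "(blaschke_factor a has_field_derivative (1 - cnj a * a) / (1 - cnj a * z)\<^sup>2) (at z)"
  unfolding blaschke_factor_def [abs_def]
  by (rule derivative_eq_intros refl | use assms in \<open>simp add: field_simps power2_eq_square\<close>)+

lemma blaschke_factor_has_field_derivative_circle: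
  assumes z: "cmod z = 1" and a: "cmod a < 1"
  shows "(blaschke_factor a has_field_derivative
           blaschke_factor a z * cnj z * of_real (poisson_kernel a z)) (at z)"
proof -
  define c where "c = cnj (z - a)"
  have nonzero: "z - a \<noteq> 0" "c \<noteq> 0" "z \<noteq> 0" using z a by (auto simp: c_def)
  have factor: "blaschke_factor a z = (z - a) / (z * c)"
    by (simp add: blaschke_factor_def one_minus_cnj_mult_circle[OF z] c_def del: complex_cnj_diff)
  have conj: "cnj z = 1 / z"
    using circle_cnj_mult[OF z] nonzero by (simp add: field_simps)
  have kernel: "of_real (poisson_kernel a z) = (1 - cnj a * a) / ((z - a) * c)"
    by (simp add: poisson_kernel_def c_def mult.commute
             flip: complex_norm_square of_real_power del: complex_cnj_diff)
  have "blaschke_factor a z * cnj z * of_real (poisson_kernel a z)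
      = (z - a) / (z * c) * (1 / z) * ((1 - cnj a * a) / ((z - a) * c))"
    by (simp only: factor conj kernel)
  also have "\<dots> = (1 - cnj a * a) / (z * c)\<^sup>2"
    using nonzero by (simp add: field_simps power2_eq_square)
  also have "\<dots> = (1 - cnj a * a) / (1 - cnj a * z)\<^sup>2"
    by (simp add: one_minus_cnj_mult_circle[OF z] c_def del: complex_cnj_diff)
  finally show ?thesis
    using blaschke_factor_has_field_derivative[OF one_minus_cnj_mult_nonzero[OF z a]] by simp
qed

lemma poisson_kernel_bounds:
  assumes z: "cmod z = 1" and a: "cmod a < 1"
  shows "(1 - cmod a ^ 2) / 4 \<le> poisson_kernel a z"
    and "poisson_kernel a z \<le> (1 - cmod a ^ 2) / (1 - cmod a) ^ 2"
proof -
  have num: "0 < 1 - cmod a ^ 2" using a by (simp add: abs_square_less_1)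
  have "0 < cmod (z - a)" using z a by auto
  moreover have "cmod (z - a) \<le> 2" using norm_triangle_ineq4[of z a] z a by simp
  moreover have "1 - cmod a \<le> cmod (z - a)" using norm_triangle_ineq2[of z a] z by simp
  ultimately have d: "cmod (z - a) ^ 2 \<le> 4" "(1 - cmod a) ^ 2 \<le> cmod (z - a) ^ 2"
      "0 < cmod (z - a) ^ 2"
    using a power_mono[of "cmod (z - a)" 2 2] power_mono[of "1 - cmod a" "cmod (z - a)" 2] by auto
  show "(1 - cmod a ^ 2) / 4 \<le> poisson_kernel a z"
    unfolding poisson_kernel_def by (rule divide_left_mono) (use d num in auto)
  show "poisson_kernel a z \<le> (1 - cmod a ^ 2) / (1 - cmod a) ^ 2"
    unfolding poisson_kernel_def by (rule divide_left_mono) (use d num a in auto)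
qed

lemma poisson_kernel_pos: "cmod z = 1 \<Longrightarrow> cmod a < 1 \<Longrightarrow> 0 < poisson_kernel a z"
  using poisson_kernel_bounds(1)[of z a] abs_square_less_1[of "cmod a"] by simp

lemma norm_blaschke_circle:
  "cmod z = 1 \<Longrightarrow> \<forall>a\<in>set zs. cmod a < 1 \<Longrightarrow> cmod (blaschke lam zs z) = cmod lam"
  by (induction zs) (simp_all add: blaschke_Nil blaschke_Cons norm_mult norm_blaschke_factor_circle)

lemma blaschke_has_field_derivative_circle:
  assumes z: "cmod z = 1" and zs: "\<forall>a\<in>set zs. cmod a < 1"
  shows "(blaschke lam zs has_field_derivative
           blaschke lam zs z * cnj z * of_real (poisson_sum zs z)) (at z)"
  using zs
proof (induction zs)
  case Nil
  show ?case by (simp add: blaschke_Nil poisson_sum_def)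
next
  case (Cons a zs)
  have "((\<lambda>z. blaschke_factor a z * blaschke lam zs z) has_field_derivative
      blaschke_factor a z * (blaschke lam zs z * cnj z * of_real (poisson_sum zs z))
      + blaschke_factor a z * cnj z * of_real (poisson_kernel a z) * blaschke lam zs z) (at z)"
    using DERIV_mult'[OF blaschke_factor_has_field_derivative_circle[OF z] Cons.IH] Cons.prems
    by auto
  then show ?case
    by (simp add: blaschke_Cons [abs_def] poisson_sum_def algebra_simps)
qed

lemma poisson_sum_nonneg: "cmod z = 1 \<Longrightarrow> \<forall>a\<in>set zs. cmod a < 1 \<Longrightarrow> 0 \<le> poisson_sum zs z"
  unfolding poisson_sum_def
  by (induction zs) (auto intro: add_nonneg_nonneg less_imp_le poisson_kernel_pos)

lemma poisson_sum_lower: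
  "cmod z = 1 \<Longrightarrow> \<forall>a\<in>set zs. cmod a < 1 \<Longrightarrow> a \<in> set zs
    \<Longrightarrow> (1 - cmod a ^ 2) / 4 \<le> poisson_sum zs z"
proof (induction zs)
  case (Cons b zs)
  have "0 \<le> poisson_sum zs z" "0 < poisson_kernel b z"
    using Cons.prems by (auto intro: poisson_sum_nonneg poisson_kernel_pos)
  moreover have "(1 - cmod a ^ 2) / 4 \<le> poisson_kernel b z" if "a = b"
    using Cons.prems poisson_kernel_bounds(1)[of z b] that by simp
  ultimately show ?case
    using Cons by (cases "a = b") (auto simp: poisson_sum_def)
qed simp

lemma poisson_sum_upper:
  "cmod z = 1 \<Longrightarrow> \<forall>a\<in>set zs. cmod a < 1
    \<Longrightarrow> poisson_sum zs z \<le> (\<Sum>a\<leftarrow>zs. (1 - cmod a ^ 2) / (1 - cmod a) ^ 2)"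
  unfolding poisson_sum_def by (induction zs) (auto intro: add_mono poisson_kernel_bounds(2))

lemma continuous_on_poisson_sum:
  "\<forall>a\<in>set zs. cmod a < 1 \<Longrightarrow> continuous_on circle (poisson_sum zs)"
proof (induction zs)
  case (Cons a zs)
  have "continuous_on circle (poisson_kernel a)"
    unfolding poisson_kernel_def [abs_def] using Cons.prems
    by (intro continuous_intros) auto
  then show ?case
    using Cons by (simp add: poisson_sum_def [abs_def] continuous_on_add)
qed (simp add: poisson_sum_def)

section \<open>Lifting maps of the circle\<close>

lemma cis_eq_cis_iff: "cis a = cis b \<longleftrightarrow> (\<exists>n::int. a = b + 2 * pi * of_int n)"
  unfolding cis_conv_exp exp_eq by (auto simp: complex_eq_iff algebra_simps)

lemma cis_Arg_circle: "cmod z = 1 \<Longrightarrow> cis (Arg z) = z"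
  by (subst cis_Arg) (auto simp: sgn_eq)

lemma exists_real_antiderivative:
  fixes p :: "real \<Rightarrow> real"
  assumes "\<And>x. isCont p x"
  obtains F where "\<And>x. (F has_real_derivative p x) (at x)"
  using einterval_antiderivative[of "-\<infinity>" "\<infinity>" p] assms
  by (auto simp: has_real_derivative_iff_has_vector_derivative)

text \<open>Near \<open>-1\<close>, where \<open>Arg\<close> jumps, the argument of \<open>-z\<close> is used instead.\<close>
lemma continuous_on_circle_if_cis:
  assumes cont: "continuous_on UNIV (\<lambda>s. F (cis s))"
  shows "continuous_on circle F"
proof (unfold continuous_on_eq_continuous_within, intro ballI)
  fix w :: complex assume w: "w \<in> circle"
  have H: "isCont (\<lambda>s. F (cis s)) y" for y
    using cont by (simp add: continuous_on_eq_continuous_at)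
  have Arg: "F (cis (Arg x)) = F x" if "x \<in> circle" for x
    using cis_Arg_circle[of x] that by simp
  have Arg_minus: "F (cis (Arg (- x) + pi)) = F x" if "x \<in> circle" for x
  proof -
    have "cis (Arg (- x) + pi) = - cis (Arg (- x))" by (simp add: minus_cis)
    then show ?thesis using cis_Arg_circle[of "- x"] that by simp
  qed
  show "continuous (at w within circle) F"
  proof (cases "w \<in> \<real>\<^sub>\<le>\<^sub>0")
    case False
    have "continuous (at w) (\<lambda>x. F (cis (Arg x)))"
      using continuous_at_compose[OF continuous_at_Arg[OF False] H] by (simp add: o_def)
    then show ?thesis
      by (rule continuous_transform_within[of _ _ _ 1, OF continuous_at_imp_continuous_within])
         (use w Arg in auto)
  next
    case True
    then have "- w \<notin> \<real>\<^sub>\<le>\<^sub>0"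
      using w by (auto simp: complex_nonpos_Reals_iff complex_eq_iff cmod_eq_Re)
    then have "continuous (at w) (\<lambda>x. Arg (- x) + pi)"
      by (intro continuous_intros continuous_at_compose[OF _ continuous_at_Arg, unfolded o_def])
    then have "continuous (at w) (\<lambda>x. F (cis (Arg (- x) + pi)))"
      using continuous_at_compose[OF _ H] by (simp add: o_def)
    then show ?thesis
      by (rule continuous_transform_within[of _ _ _ 1, OF continuous_at_imp_continuous_within])
         (use w Arg_minus in auto)
  qed
qed

lemma shift_of_int_multiple:
  fixes \<theta> :: "real \<Rightarrow> real"
  assumes shift: "\<And>t. \<theta> (t + p) = \<theta> t + q"
  shows "\<theta> (t + of_int j * p) = \<theta> t + of_int j * q"
proof (induction j rule: int_induct[where k = 0])
  case (step1 i)
  then show ?case using shift[of "t + of_int i * p"] by (simp add: algebra_simps)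
next
  case (step2 i)
  then show ?case using shift[of "t + of_int (i - 1) * p"] by (simp add: algebra_simps)
qed simp

lemma surj_if_continuous_shift:
  fixes \<theta> :: "real \<Rightarrow> real"
  assumes cont: "\<And>t. isCont \<theta> t" and shift: "\<And>t. \<theta> (t + p) = \<theta> t + q"
    and "0 \<le> p" "0 < q"
  shows "surj \<theta>"
proof (rule surjI)
  fix y
  define j where "j = \<lfloor>(y - \<theta> 0) / q\<rfloor>"
  have "of_int j \<le> (y - \<theta> 0) / q" "(y - \<theta> 0) / q < of_int j + 1"
    unfolding j_def by linarith+
  then have "of_int j * q \<le> y - \<theta> 0" "y - \<theta> 0 < (of_int j + 1) * q"
    using \<open>0 < q\<close> by (simp_all add: field_simps)
  moreover have step: "\<theta> (of_int i * p) = \<theta> 0 + of_int i * q" for i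
    using shift_of_int_multiple[where \<theta> = \<theta>, OF shift, of 0 i] by simp
  ultimately have "\<theta> (of_int j * p) \<le> y" "y \<le> \<theta> (of_int (j + 1) * p)"
    unfolding step by (simp_all add: algebra_simps)
  moreover have "of_int j * p \<le> of_int (j + 1) * p" using \<open>0 \<le> p\<close> by (simp add: algebra_simps)
  ultimately obtain x where "\<theta> x = y"
    using IVT'[of \<theta> "of_int j * p" y "of_int (j + 1) * p"] cont
    by (auto intro: continuous_at_imp_continuous_on)
  then show "\<theta> (SOME x. \<theta> x = y) = y" by (rule someI)
qed

abbreviation circle_fibre :: "(complex \<Rightarrow> complex) \<Rightarrow> complex \<Rightarrow> complex set" where
  "circle_fibre R w \<equiv> {z \<in> circle. R z = w}"

lemma circle_fibre_eq_image:
  fixes f :: "complex \<Rightarrow> complex" and \<theta> G :: "real \<Rightarrow> real" and m :: nat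
  assumes lift: "\<And>t. f (cis t) = cis (\<theta> t)"
    and shift: "\<And>t. \<theta> (t + 2 * pi) = \<theta> t + 2 * pi * m"
    and inverse: "\<And>y. \<theta> (G y) = y" "\<And>t. G (\<theta> t) = t"
    and "m > 0"
  shows "circle_fibre f (cis s) = (\<lambda>k. cis (G (s + 2 * pi * k))) ` {..<m}"
proof
  show "circle_fibre f (cis s) \<subseteq> (\<lambda>k. cis (G (s + 2 * pi * k))) ` {..<m}"
  proof clarify
    fix z :: complex assume z: "z \<in> circle" "f z = cis s"
    define t where "t = Arg z"
    have zt: "cis t = z" unfolding t_def using z by (simp add: cis_Arg_circle)
    have "cis (\<theta> t) = cis s" using lift[of t] z zt by simp
    then obtain j :: int where j: "\<theta> t = s + 2 * pi * of_int j"
      by (auto simp: cis_eq_cis_iff)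
    define q r where "q = j div int m" and "r = j mod int m"
    have r: "0 \<le> r" "r < int m" "j = int m * q + r"
      using \<open>m > 0\<close> by (simp_all add: q_def r_def)
    have "\<theta> (t + of_int (- q) * (2 * pi)) = s + 2 * pi * of_int r"
      using shift_of_int_multiple[where \<theta> = \<theta>, OF shift, of t "- q"] j r by (simp add: algebra_simps)
    then have "G (s + 2 * pi * real (nat r)) = t + 2 * pi * of_int (- q)"
      using inverse(2) r by (metis mult.commute of_nat_nat)
    then have "cis (G (s + 2 * pi * real (nat r))) = cis t"
      unfolding cis_eq_cis_iff by (intro exI[of _ "- q"]) simp
    then have "cis (G (s + 2 * pi * real (nat r))) = z"
      using zt by simp
    moreover have "nat r < m" using r by simp
    ultimately show "z \<in> (\<lambda>k. cis (G (s + 2 * pi * k))) ` {..<m}" by blast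
  qed
  have "cis (s + 2 * pi * k) = cis s" for k :: nat
    unfolding cis_eq_cis_iff by (intro exI[of _ "int k"]) simp
  then show "(\<lambda>k. cis (G (s + 2 * pi * k))) ` {..<m} \<subseteq> circle_fibre f (cis s)"
    using lift inverse(1) by auto
qed

lemma inj_on_fibre_parametrization:
  fixes \<theta> G :: "real \<Rightarrow> real" and m :: nat
  assumes shift: "\<And>t. \<theta> (t + 2 * pi) = \<theta> t + 2 * pi * m"
    and inverse: "\<And>y. \<theta> (G y) = y"
  shows "inj_on (\<lambda>k. cis (G (s + 2 * pi * k))) {..<m}"
proof (rule inj_onI)
  fix k l assume kl: "k \<in> {..<m}" "l \<in> {..<m}"
    and "cis (G (s + 2 * pi * k)) = cis (G (s + 2 * pi * l))"
  then obtain n :: int where n: "G (s + 2 * pi * k) = G (s + 2 * pi * l) + of_int n * (2 * pi)"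
    unfolding cis_eq_cis_iff by (auto simp: mult.commute)
  have "s + 2 * pi * k = \<theta> (G (s + 2 * pi * l) + of_int n * (2 * pi))"
    by (simp only: inverse flip: n)
  also have "\<dots> = s + 2 * pi * l + of_int n * (2 * pi * m)"
    using shift_of_int_multiple[where \<theta> = \<theta>, OF shift] by (simp only: inverse)
  finally have "2 * pi * (real k - real l - of_int n * real m) = 0"
    by (simp add: algebra_simps)
  then have "real_of_int (int k - int l) = real_of_int (n * int m)"
    by simp
  then have "int k - int l = n * int m"
    by (simp only: of_int_eq_iff)
  moreover have "\<bar>int k - int l\<bar> < int m"
    using kl by (simp add: abs_less_iff)
  ultimately have "\<bar>n\<bar> * int m < 1 * int m"
    by (simp add: abs_mult)
  then have "\<bar>n\<bar> < 1"
    by (simp only: mult_less_cancel_right of_nat_less_0_iff)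
  then have "n = 0"
    by simp
  then show "k = l"
    using \<open>int k - int l = n * int m\<close> by simp
qed

text \<open>For \<open>z = cis t\<close> the derivative of \<open>t \<mapsto> f (cis t)\<close> is \<open>\<i> f z p z\<close>, so \<open>p\<close> is the
  angular speed of \<open>f\<close>; an antiderivative of \<open>p\<close>, corrected by a constant, is a lift of \<open>f\<close>.\<close>
lemma circle_map_argument_lift:
  fixes f :: "complex \<Rightarrow> complex" and p :: "complex \<Rightarrow> real"
  assumes deriv: "\<And>z. cmod z = 1 \<Longrightarrow> (f has_field_derivative f z * cnj z * of_real (p z)) (at z)"
    and p: "continuous_on circle p" and norm: "cmod (f 1) = 1"
  obtains \<theta> where "\<And>t. (\<theta> has_real_derivative p (cis t)) (at t)" "\<And>t. f (cis t) = cis (\<theta> t)"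
proof -
  have "continuous_on UNIV (\<lambda>t. p (cis t))"
    by (rule continuous_on_compose2[OF p]) (auto intro: continuous_intros)
  then have "isCont (\<lambda>t. p (cis t)) t" for t
    by (simp add: continuous_on_eq_continuous_at)
  then obtain \<theta>0 where \<theta>0: "\<And>t. (\<theta>0 has_real_derivative p (cis t)) (at t)"
    using exists_real_antiderivative by blast
  define \<phi> where "\<phi> t = f (cis t) * cis (- \<theta>0 t)" for t
  have \<phi>_deriv: "(\<phi> has_vector_derivative 0) (at t)" for t
  proof -
    have "(cis has_vector_derivative \<i> * cis t) (at t)"
      using has_derivative_cis[OF has_derivative_ident, of t UNIV]
      by (simp add: has_vector_derivative_def)
    from field_vector_diff_chain_at[OF this deriv]
    have "((\<lambda>t. f (cis t)) has_vector_derivative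
        \<i> * cis t * (f (cis t) * cnj (cis t) * of_real (p (cis t)))) (at t)"
      by (simp add: o_def)
    moreover have "((\<lambda>t. cis (- \<theta>0 t)) has_vector_derivative
        (- p (cis t)) *\<^sub>R (\<i> * cis (- \<theta>0 t))) (at t)"
      using has_derivative_cis[OF DERIV_minus[OF \<theta>0, unfolded has_field_derivative_def]]
      by (simp add: has_vector_derivative_def mult.commute)
    ultimately have "(\<phi> has_vector_derivative
        f (cis t) * ((- p (cis t)) *\<^sub>R (\<i> * cis (- \<theta>0 t)))
        + \<i> * cis t * (f (cis t) * cnj (cis t) * of_real (p (cis t))) * cis (- \<theta>0 t)) (at t)"
      unfolding \<phi>_def by (rule has_vector_derivative_mult)
    also have "f (cis t) * ((- p (cis t)) *\<^sub>R (\<i> * cis (- \<theta>0 t)))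
        + \<i> * cis t * (f (cis t) * cnj (cis t) * of_real (p (cis t))) * cis (- \<theta>0 t)
      = \<i> * f (cis t) * of_real (p (cis t)) * cis (- \<theta>0 t) * (cis t * cnj (cis t) - 1)"
      by (simp only: scaleR_conv_of_real of_real_minus) algebra
    also have "\<dots> = 0"
      using circle_cnj_mult[of "cis t"] by simp
    finally show ?thesis .
  qed
  obtain c where c: "\<And>t. \<phi> t = c"
    by (rule has_vector_derivative_zero_constant[of UNIV \<phi>]) (use \<phi>_deriv in auto)
  have "cmod c = 1"
    unfolding c[of 0, symmetric] \<phi>_def using norm by (simp add: norm_mult)
  then have "f (cis t) = cis (Arg c + \<theta>0 t)" for t
  proof -
    have "f (cis t) = \<phi> t * cis (\<theta>0 t)"
      by (simp add: \<phi>_def mult.assoc cis_mult)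
    also have "\<dots> = cis (Arg c) * cis (\<theta>0 t)"
      by (simp add: c cis_Arg_circle[OF \<open>cmod c = 1\<close>])
    also have "\<dots> = cis (Arg c + \<theta>0 t)"
      by (simp add: cis_mult)
    finally show ?thesis .
  qed
  moreover have "((\<lambda>t. Arg c + \<theta>0 t) has_real_derivative p (cis t)) (at t)" for t
    using DERIV_add[OF DERIV_const \<theta>0] by simp
  ultimately show ?thesis using that by blast
qed

lemma argument_lift_degree:
  fixes \<theta> :: "real \<Rightarrow> real"
  assumes deriv: "\<And>t. (\<theta> has_real_derivative p (cis t)) (at t)"
    and lift: "\<And>t. f (cis t) = cis (\<theta> t)" and pos: "\<And>z. cmod z = 1 \<Longrightarrow> 0 < p z"
  obtains m :: nat where "m > 0" "\<And>t. \<theta> (t + 2 * pi) = \<theta> t + 2 * pi * m"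
proof -
  have "((\<lambda>t. \<theta> (t + 2 * pi) - \<theta> t) has_real_derivative 0) (at t within UNIV)" for t
    using DERIV_diff[OF DERIV_shift[THEN iffD1, OF deriv[of "t + 2 * pi"]] deriv[of t]]
    by (simp flip: cis_mult)
  then obtain d where d: "\<And>t. \<theta> (t + 2 * pi) - \<theta> t = d"
    using has_field_derivative_zero_constant[of UNIV "\<lambda>t. \<theta> (t + 2 * pi) - \<theta> t"] by blast
  have "cis (\<theta> (0 + 2 * pi)) = cis (\<theta> 0)"
    by (simp flip: lift)
  then obtain n :: int where n: "d = 2 * pi * n"
    using d[of 0] unfolding cis_eq_cis_iff by auto
  have increasing: "\<exists>y. DERIV \<theta> t :> y \<and> 0 < y" for t
    using deriv pos[of "cis t"] by auto
  have "\<theta> 0 < \<theta> (2 * pi)"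
    by (rule DERIV_pos_imp_increasing[of 0 "2 * pi" \<theta>]) (simp_all add: increasing)
  then have "0 < 2 * pi * real_of_int n"
    using d[of 0] n by simp
  then have "n > 0"
    by (simp add: zero_less_mult_iff)
  moreover have "\<theta> (t + 2 * pi) = \<theta> t + 2 * pi * nat n" for t
    using d[of t] n \<open>n > 0\<close> by simp
  ultimately show ?thesis
    using that[of "nat n"] by simp
qed

section \<open>The Hilbert module of a finite Blaschke product\<close>

lemma ipX_ract: "ipX R \<xi> (ract R \<eta> b) w = ipX R \<xi> \<eta> w * b w"
  unfolding ipX_def aleksandrov_def ract_def sum_distrib_right by (rule sum.cong) auto

lemma ipX_lact: "ipX R (lact a \<xi>) \<eta> = ipX R \<xi> (lact (\<lambda>z. cnj (a z)) \<eta>)"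
  unfolding ipX_def lact_def by (simp add: ac_simps)

lemma ipX_self:
  "ipX R \<xi> \<xi> w = of_real (\<Sum>z\<in>circle_fibre R w. cmod (\<xi> z) ^ 2 / cmod (deriv R z))"
  unfolding ipX_def aleksandrov_def of_real_sum
  by (rule sum.cong) (simp_all flip: complex_norm_square add: mult.commute)

lemma norm_le_supT: "contT f \<Longrightarrow> w \<in> circle \<Longrightarrow> cmod (f w) \<le> supT f"
  unfolding supT_def contT_def
  by (intro cSUP_upper bounded_imp_bdd_above compact_imp_bounded compact_continuous_image
        continuous_intros) auto

lemma supT_le: "(\<And>w. w \<in> circle \<Longrightarrow> cmod (f w) \<le> B) \<Longrightarrow> supT f \<le> B"
  unfolding supT_def by (rule cSUP_least) (auto intro: exI[of _ 1])

lemma Cauchy_converges_if_equivalent_to_sup_norm: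
  fixes N :: "('a::topological_space \<Rightarrow> 'b::banach) \<Rightarrow> real" and x :: "nat \<Rightarrow> 'a \<Rightarrow> 'b"
  assumes lower: "\<And>\<xi> z. continuous_on S \<xi> \<Longrightarrow> z \<in> S \<Longrightarrow> norm (\<xi> z) \<le> C * N \<xi>"
    and upper: "\<And>\<xi> B. (\<And>z. z \<in> S \<Longrightarrow> norm (\<xi> z) \<le> B) \<Longrightarrow> N \<xi> \<le> K * B"
    and nonneg: "\<And>\<xi>. continuous_on S \<xi> \<Longrightarrow> 0 \<le> N \<xi>"
    and "0 \<le> C" "0 \<le> K"
    and cont: "\<And>n. continuous_on S (x n)"
    and Cauchy: "\<And>e. e > 0 \<Longrightarrow> \<exists>M. \<forall>m\<ge>M. \<forall>n\<ge>M. N (\<lambda>z. x m z - x n z) < e"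
  obtains y where "continuous_on S y" "(\<lambda>n. N (\<lambda>z. x n z - y z)) \<longlonglongrightarrow> 0"
proof -
  have "uniformly_Cauchy_on S x"
    unfolding uniformly_Cauchy_on_def
  proof (intro allI impI)
    fix e :: real assume "e > 0"
    then obtain M where M: "\<And>m n. m \<ge> M \<Longrightarrow> n \<ge> M \<Longrightarrow> N (\<lambda>z. x m z - x n z) < e / (C + 1)"
      using Cauchy[of "e / (C + 1)"] \<open>0 \<le> C\<close> by auto
    have "dist (x m z) (x n z) < e" if "z \<in> S" "m \<ge> M" "n \<ge> M" for z m n
    proof -
      have "dist (x m z) (x n z) \<le> C * N (\<lambda>z. x m z - x n z)"
        using lower[of "\<lambda>z. x m z - x n z"] cont that by (simp add: dist_norm continuous_on_diff)
      also have "\<dots> \<le> C * (e / (C + 1))"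
        using M[OF that(2,3)] \<open>0 \<le> C\<close> by (intro mult_left_mono) auto
      also have "\<dots> < e"
        using \<open>e > 0\<close> \<open>0 \<le> C\<close> by (simp add: field_simps)
      finally show ?thesis .
    qed
    then show "\<exists>M. \<forall>z\<in>S. \<forall>m\<ge>M. \<forall>n\<ge>M. dist (x m z) (x n z) < e" by blast
  qed
  then obtain y where lim: "uniform_limit S x y sequentially"
    using Cauchy_uniformly_convergent uniformly_convergent_on_def by blast
  have y: "continuous_on S y"
    by (rule uniform_limit_theorem[OF _ lim]) (use cont in auto)
  have "(\<lambda>n. N (\<lambda>z. x n z - y z)) \<longlonglongrightarrow> 0"
    unfolding LIMSEQ_iff
  proof (intro allI impI)
    fix r :: real assume "r > 0"
    then have "\<forall>\<^sub>F n in sequentially. \<forall>z\<in>S. dist (x n z) (y z) < r / (K + 1)"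
      using lim \<open>0 \<le> K\<close> unfolding uniform_limit_iff by simp
    then obtain M where M: "\<And>n z. n \<ge> M \<Longrightarrow> z \<in> S \<Longrightarrow> norm (x n z - y z) < r / (K + 1)"
      unfolding eventually_sequentially dist_norm by blast
    have "norm (N (\<lambda>z. x n z - y z) - 0) < r" if "n \<ge> M" for n
    proof -
      have "N (\<lambda>z. x n z - y z) \<le> K * (r / (K + 1))"
        using M[OF that] by (intro upper less_imp_le)
      also have "\<dots> < r"
        using \<open>r > 0\<close> \<open>0 \<le> K\<close> by (simp add: field_simps)
      finally show ?thesis
        using nonneg[of "\<lambda>z. x n z - y z"] cont y by (simp add: continuous_on_diff)
    qed
    then show "\<exists>M. \<forall>n\<ge>M. norm (N (\<lambda>z. x n z - y z) - 0) < r" by blast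
  qed
  with y that show ?thesis by blast
qed

locale finite_blaschke =
  fixes lam :: complex and zs :: "complex list"
  assumes zeros_nonempty: "zs \<noteq> []"
    and norm_lam: "cmod lam = 1"
    and zeros_in_disc: "\<forall>a\<in>set zs. cmod a < 1"
begin

lemma norm_circle: "cmod z = 1 \<Longrightarrow> cmod (blaschke lam zs z) = 1"
  using norm_blaschke_circle zeros_in_disc norm_lam by simp

lemma continuous_on_circle: "continuous_on circle (blaschke lam zs)"
proof (intro continuous_at_imp_continuous_on ballI)
  fix z :: complex assume "z \<in> circle"
  then show "isCont (blaschke lam zs) z"
    by (intro DERIV_isCont[OF blaschke_has_field_derivative_circle[OF _ zeros_in_disc]]) simp
qed

lemma norm_deriv_circle: "cmod z = 1 \<Longrightarrow> cmod (deriv (blaschke lam zs) z) = poisson_sum zs z"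
  using DERIV_imp_deriv[OF blaschke_has_field_derivative_circle[OF _ zeros_in_disc]]
    norm_circle poisson_sum_nonneg[OF _ zeros_in_disc]
  by (simp add: norm_mult)

lemma poisson_sum_lower_bound:
  obtains c where "0 < c" "\<And>z. cmod z = 1 \<Longrightarrow> c \<le> poisson_sum zs z"
proof
  have "hd zs \<in> set zs" using zeros_nonempty by simp
  then show "0 < (1 - cmod (hd zs) ^ 2) / 4"
    using zeros_in_disc by (simp add: abs_square_less_1)
  show "(1 - cmod (hd zs) ^ 2) / 4 \<le> poisson_sum zs z" if "cmod z = 1" for z
    using poisson_sum_lower[OF that zeros_in_disc \<open>hd zs \<in> set zs\<close>] .
qed

lemma poisson_sum_pos: "cmod z = 1 \<Longrightarrow> 0 < poisson_sum zs z"
  by (rule poisson_sum_lower_bound) (rule order_less_le_trans)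

text \<open>\<open>G\<close> is the inverse of a lift of \<open>blaschke lam zs\<close> along \<open>cis\<close>, and \<open>m\<close> is the degree
  of that lift.\<close>
lemma fibre_parametrization:
  obtains m :: nat and G where "m > 0" "continuous_on UNIV G"
    "\<And>s. circle_fibre (blaschke lam zs) (cis s) = (\<lambda>k. cis (G (s + 2 * pi * k))) ` {..<m}"
    "\<And>s. inj_on (\<lambda>k. cis (G (s + 2 * pi * k))) {..<m}"
proof -
  obtain \<theta> where deriv: "\<And>t. (\<theta> has_real_derivative poisson_sum zs (cis t)) (at t)"
    and lift: "\<And>t. blaschke lam zs (cis t) = cis (\<theta> t)"
    using circle_map_argument_lift[OF blaschke_has_field_derivative_circle[OF _ zeros_in_disc]
        continuous_on_poisson_sum[OF zeros_in_disc]] norm_circle[of 1] by auto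
  obtain m :: nat where "m > 0" and shift: "\<And>t. \<theta> (t + 2 * pi) = \<theta> t + 2 * pi * m"
    using argument_lift_degree[OF deriv lift poisson_sum_pos] by blast
  have cont: "isCont \<theta> t" for t
    using deriv by (rule DERIV_isCont)
  have increasing: "\<exists>y. DERIV \<theta> t :> y \<and> 0 < y" for t
    using deriv poisson_sum_pos[of "cis t"] by auto
  have "strict_mono \<theta>"
    by (rule strict_monoI, rule DERIV_pos_imp_increasing) (simp_all add: increasing)
  then have "inj \<theta>"
    by (rule strict_mono_imp_inj_on)
  moreover have "surj \<theta>"
    by (rule surj_if_continuous_shift[OF cont shift]) (use \<open>m > 0\<close> in auto)
  ultimately have inverse: "\<theta> (inv \<theta> y) = y" "inv \<theta> (\<theta> t) = t" for y t
    by (simp_all add: surj_f_inv_f)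
  have "continuous_on UNIV (inv \<theta>)"
  proof (intro continuous_at_imp_continuous_on ballI)
    fix y :: real
    have "isCont (inv \<theta>) (\<theta> (inv \<theta> y))"
      by (rule isCont_inverse_function[of 1]) (simp_all add: inverse cont)
    then show "isCont (inv \<theta>) y" by (simp add: inverse)
  qed
  then show ?thesis
    using that circle_fibre_eq_image[OF lift shift inverse \<open>m > 0\<close>]
      inj_on_fibre_parametrization[OF shift inverse(1)] \<open>m > 0\<close> by blast
qed

lemma card_fibre:
  obtains m :: nat where "m > 0" "\<And>w. w \<in> circle \<Longrightarrow> card (circle_fibre (blaschke lam zs) w) = m"
proof (rule fibre_parametrization)
  fix m :: nat and G
  assume "m > 0"
    and fibre: "\<And>s. circle_fibre (blaschke lam zs) (cis s) = (\<lambda>k. cis (G (s + 2 * pi * k))) ` {..<m}"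
    and inj: "\<And>s. inj_on (\<lambda>k. cis (G (s + 2 * pi * k))) {..<m}"
  show ?thesis
  proof (rule that[OF \<open>m > 0\<close>])
    fix w :: complex assume "w \<in> circle"
    then have "card (circle_fibre (blaschke lam zs) w)
        = card (circle_fibre (blaschke lam zs) (cis (Arg w)))"
      by (simp add: cis_Arg_circle)
    also have "\<dots> = m"
      by (simp only: fibre card_image[OF inj] card_lessThan)
    finally show "card (circle_fibre (blaschke lam zs) w) = m" .
  qed
qed

lemma continuous_on_aleksandrov:
  assumes a: "continuous_on circle a"
  shows "continuous_on circle (aleksandrov (blaschke lam zs) a)"
proof (rule fibre_parametrization)
  fix m :: nat and G
  assume G: "continuous_on UNIV G"
    and fibre: "\<And>s. circle_fibre (blaschke lam zs) (cis s) = (\<lambda>k. cis (G (s + 2 * pi * k))) ` {..<m}"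
    and inj: "\<And>s. inj_on (\<lambda>k. cis (G (s + 2 * pi * k))) {..<m}"
  define g where "g k s = cis (G (s + 2 * pi * k))" for k :: nat and s
  have "continuous_on UNIV (\<lambda>s. G (s + 2 * pi * k))" for k :: nat
    by (rule continuous_on_compose2[OF G]) (auto intro: continuous_intros)
  then have g: "continuous_on UNIV (g k)" "g k s \<in> circle" for k s
    unfolding g_def by (simp_all add: continuous_on_cis)
  have formula: "aleksandrov (blaschke lam zs) a (cis s)
      = (\<Sum>k<m. a (g k s) / of_real (poisson_sum zs (g k s)))" for s
    unfolding aleksandrov_def fibre sum.reindex[OF inj] using g(2)
    by (simp add: g_def norm_deriv_circle)
  have "continuous_on UNIV (\<lambda>s. a (g k s))" for k
    by (rule continuous_on_compose2[OF a g(1)]) (use g in auto)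
  moreover have "continuous_on UNIV (\<lambda>s. poisson_sum zs (g k s))" for k
    by (rule continuous_on_compose2[OF continuous_on_poisson_sum[OF zeros_in_disc] g(1)])
      (use g in auto)
  moreover have "complex_of_real (poisson_sum zs (g k s)) \<noteq> 0" for k s
    using poisson_sum_pos g(2) by (simp add: order_less_imp_not_eq2)
  ultimately have "continuous_on UNIV (\<lambda>s. \<Sum>k<m. a (g k s) / of_real (poisson_sum zs (g k s)))"
    by (intro continuous_on_sum continuous_on_divide continuous_on_of_real) auto
  then show ?thesis
    by (intro continuous_on_circle_if_cis) (simp add: formula)
qed

lemma ipX_self_circle:
  "ipX (blaschke lam zs) \<xi> \<xi> w
     = of_real (\<Sum>z\<in>circle_fibre (blaschke lam zs) w. cmod (\<xi> z) ^ 2 / poisson_sum zs z)"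
  unfolding ipX_self by (intro arg_cong[where f = of_real] sum.cong) (auto simp: norm_deriv_circle)

lemma norm_ipX_self_circle:
  "cmod (ipX (blaschke lam zs) \<xi> \<xi> w)
     = (\<Sum>z\<in>circle_fibre (blaschke lam zs) w. cmod (\<xi> z) ^ 2 / poisson_sum zs z)"
  unfolding ipX_self_circle norm_of_real
  by (rule abs_of_nonneg, rule sum_nonneg)
    (auto intro: divide_nonneg_nonneg less_imp_le[OF poisson_sum_pos])

lemma
  assumes "w \<in> circle"
  shows finite_circle_fibre: "finite (circle_fibre (blaschke lam zs) w)"
    and circle_fibre_nonempty: "circle_fibre (blaschke lam zs) w \<noteq> {}"
proof -
  obtain m :: nat where "m > 0" and card: "\<And>w. w \<in> circle \<Longrightarrow> card (circle_fibre (blaschke lam zs) w) = m"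
    using card_fibre by blast
  then have "0 < card (circle_fibre (blaschke lam zs) w)"
    using assms by simp
  then show "finite (circle_fibre (blaschke lam zs) w)" "circle_fibre (blaschke lam zs) w \<noteq> {}"
    unfolding card_gt_0_iff by blast+
qed

lemma contT_ipX: "contT \<xi> \<Longrightarrow> contT \<eta> \<Longrightarrow> contT (ipX (blaschke lam zs) \<xi> \<eta>)"
  unfolding contT_def ipX_def by (intro continuous_on_aleksandrov continuous_intros)

lemma contT_ract: "contT \<xi> \<Longrightarrow> contT b \<Longrightarrow> contT (ract (blaschke lam zs) \<xi> b)"
  unfolding contT_def ract_def
  by (intro continuous_on_mult continuous_on_compose2[OF _ continuous_on_circle])
    (auto simp: norm_circle)

lemma ipX_self_zero_imp_zero:
  assumes zero: "\<forall>w\<in>circle. ipX (blaschke lam zs) \<xi> \<xi> w = 0" and z: "z \<in> circle"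
  shows "\<xi> z = 0"
proof -
  let ?w = "blaschke lam zs z"
  have w: "?w \<in> circle" using z norm_circle by simp
  note finite_circle_fibre[OF w]
  moreover have "ipX (blaschke lam zs) \<xi> \<xi> ?w = 0"
    using zero w by blast
  then have "(\<Sum>z\<in>circle_fibre (blaschke lam zs) ?w. cmod (\<xi> z) ^ 2 / poisson_sum zs z) = 0"
    unfolding ipX_self_circle by (simp only: of_real_eq_0_iff)
  ultimately have "cmod (\<xi> z) ^ 2 / poisson_sum zs z = 0"
    using z by (subst (asm) sum_nonneg_eq_0_iff)
      (auto intro: divide_nonneg_nonneg less_imp_le[OF poisson_sum_pos])
  then show ?thesis
    using poisson_sum_pos[of z] z by simp
qed

lemma norm2_nonneg: "contT \<xi> \<Longrightarrow> 0 \<le> norm2 (blaschke lam zs) \<xi>"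
  unfolding norm2_def
  using norm_le_supT[OF contT_ipX, of \<xi> \<xi> 1] by (simp add: order_trans[OF norm_ge_zero])

lemma norm_le_norm2:
  obtains C where "0 \<le> C" "\<And>\<xi> z. contT \<xi> \<Longrightarrow> z \<in> circle \<Longrightarrow> cmod (\<xi> z) \<le> C * norm2 (blaschke lam zs) \<xi>"
proof
  define C where "C = (\<Sum>a\<leftarrow>zs. (1 - cmod a ^ 2) / (1 - cmod a) ^ 2)"
  have C: "poisson_sum zs z \<le> C" if "cmod z = 1" for z
    unfolding C_def by (rule poisson_sum_upper[OF that zeros_in_disc])
  show "0 \<le> sqrt C"
    using C[of 1] poisson_sum_pos[of 1] by simp
  fix \<xi> z assume \<xi>: "contT \<xi>" and z: "z \<in> circle"
  let ?w = "blaschke lam zs z"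
  have w: "?w \<in> circle" using z norm_circle by simp
  have "cmod (\<xi> z) ^ 2 / C \<le> cmod (\<xi> z) ^ 2 / poisson_sum zs z"
    using z C[of z] poisson_sum_pos[of z] by (intro divide_left_mono) auto
  also have "\<dots> \<le> (\<Sum>z\<in>circle_fibre (blaschke lam zs) ?w. cmod (\<xi> z) ^ 2 / poisson_sum zs z)"
    using finite_circle_fibre[OF w] z
    by (intro member_le_sum) (auto intro: divide_nonneg_nonneg less_imp_le[OF poisson_sum_pos])
  also have "\<dots> = cmod (ipX (blaschke lam zs) \<xi> \<xi> ?w)"
    by (rule norm_ipX_self_circle[symmetric])
  also have "\<dots> \<le> supT (ipX (blaschke lam zs) \<xi> \<xi>)"
    using norm_le_supT[OF contT_ipX[OF \<xi> \<xi>] w] .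
  finally have "cmod (\<xi> z) ^ 2 \<le> C * supT (ipX (blaschke lam zs) \<xi> \<xi>)"
    using C[of z] poisson_sum_pos[of z] z by (simp add: field_simps)
  then show "cmod (\<xi> z) \<le> sqrt C * norm2 (blaschke lam zs) \<xi>"
    unfolding norm2_def
    by (metis real_sqrt_abs real_sqrt_le_mono real_sqrt_mult abs_norm_cancel)
qed

lemma norm2_le:
  obtains K where "0 \<le> K"
    "\<And>\<xi> B. (\<And>z. z \<in> circle \<Longrightarrow> cmod (\<xi> z) \<le> B) \<Longrightarrow> norm2 (blaschke lam zs) \<xi> \<le> K * B"
proof -
  obtain c where c: "0 < c" "\<And>z. cmod z = 1 \<Longrightarrow> c \<le> poisson_sum zs z"
    using poisson_sum_lower_bound by blast
  obtain m :: nat where "m > 0" and card: "\<And>w. w \<in> circle \<Longrightarrow> card (circle_fibre (blaschke lam zs) w) = m"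
    using card_fibre by blast
  show ?thesis
  proof (rule that)
    show "0 \<le> sqrt (m / c)" using c by simp
    fix \<xi> B assume B: "\<And>z. z \<in> circle \<Longrightarrow> cmod (\<xi> z) \<le> B"
    have "0 \<le> B" using B[of 1] by (auto intro: order_trans[OF norm_ge_zero])
    have "cmod (ipX (blaschke lam zs) \<xi> \<xi> w) \<le> m / c * B\<^sup>2" if w: "w \<in> circle" for w
    proof -
      have "cmod (ipX (blaschke lam zs) \<xi> \<xi> w)
          = (\<Sum>z\<in>circle_fibre (blaschke lam zs) w. cmod (\<xi> z) ^ 2 / poisson_sum zs z)"
        by (rule norm_ipX_self_circle)
      also have "\<dots> \<le> of_nat (card (circle_fibre (blaschke lam zs) w)) * (B\<^sup>2 / c)"
      proof (rule sum_bounded_above)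
        fix z assume "z \<in> circle_fibre (blaschke lam zs) w"
        then have "cmod (\<xi> z) ^ 2 \<le> B\<^sup>2" "c \<le> poisson_sum zs z"
          using B c(2) by (auto intro: power_mono)
        then show "cmod (\<xi> z) ^ 2 / poisson_sum zs z \<le> B\<^sup>2 / c"
          using c(1) by (intro frac_le) auto
      qed
      finally show ?thesis using card[OF w] by simp
    qed
    then have "supT (ipX (blaschke lam zs) \<xi> \<xi>) \<le> m / c * B\<^sup>2"
      by (rule supT_le)
    then show "norm2 (blaschke lam zs) \<xi> \<le> sqrt (m / c) * B"
      unfolding norm2_def using \<open>0 \<le> B\<close>
      by (metis real_sqrt_le_mono real_sqrt_mult real_sqrt_abs abs_of_nonneg)
  qed
qed

lemma norm2_Cauchy_converges:
  assumes cont: "\<And>n. contT (x n)"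
    and Cauchy: "\<And>e. e > 0 \<Longrightarrow> \<exists>M. \<forall>m\<ge>M. \<forall>n\<ge>M. norm2 (blaschke lam zs) (\<lambda>z. x m z - x n z) < e"
  obtains y where "contT y" "(\<lambda>n. norm2 (blaschke lam zs) (\<lambda>z. x n z - y z)) \<longlonglongrightarrow> 0"
proof -
  obtain C where "0 \<le> C"
    and lower: "\<And>\<xi> z. contT \<xi> \<Longrightarrow> z \<in> circle \<Longrightarrow> cmod (\<xi> z) \<le> C * norm2 (blaschke lam zs) \<xi>"
    using norm_le_norm2 by blast
  obtain K where "0 \<le> K" and upper: "\<And>\<xi> B. (\<And>z. z \<in> circle \<Longrightarrow> cmod (\<xi> z) \<le> B)
      \<Longrightarrow> norm2 (blaschke lam zs) \<xi> \<le> K * B"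
    using norm2_le by blast
  show ?thesis
    using Cauchy_converges_if_equivalent_to_sup_norm[of circle C "norm2 (blaschke lam zs)" K x]
      lower upper norm2_nonneg \<open>0 \<le> C\<close> \<open>0 \<le> K\<close> cont Cauchy that
    unfolding contT_def by blast
qed

lemma ipX_one_one_nonzero: "w \<in> circle \<Longrightarrow> ipX (blaschke lam zs) (\<lambda>z. 1) (\<lambda>z. 1) w \<noteq> 0"
proof -
  assume w: "w \<in> circle"
  have "0 < (\<Sum>z\<in>circle_fibre (blaschke lam zs) w. 1 / poisson_sum zs z)"
    using finite_circle_fibre[OF w] circle_fibre_nonempty[OF w]
    by (intro sum_pos) (auto intro: poisson_sum_pos)
  then show ?thesis
    by (simp only: ipX_self_circle of_real_eq_0_iff norm_one power_one)
qed

lemma exists_ipX_one_eq: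
  assumes f: "contT f"
  obtains \<eta> where "contT \<eta>" "\<And>w. w \<in> circle \<Longrightarrow> ipX (blaschke lam zs) (\<lambda>z. 1) \<eta> w = f w"
proof (rule that)
  let ?g = "ipX (blaschke lam zs) (\<lambda>z. 1) (\<lambda>z. 1)"
  have "contT ?g" by (rule contT_ipX) (simp_all add: contT_def)
  then have "contT (\<lambda>w. f w / ?g w)"
    using f ipX_one_one_nonzero unfolding contT_def by (intro continuous_on_divide) auto
  then show "contT (ract (blaschke lam zs) (\<lambda>z. 1) (\<lambda>w. f w / ?g w))"
    by (intro contT_ract) (simp_all add: contT_def)
  show "ipX (blaschke lam zs) (\<lambda>z. 1) (ract (blaschke lam zs) (\<lambda>z. 1) (\<lambda>w. f w / ?g w)) w = f w"
    if "w \<in> circle" for w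
    using ipX_one_one_nonzero[OF that] by (simp add: ipX_ract)
qed

lemma dense_span_ipX:
  assumes "contT f" "e > 0"
  shows "\<exists>(n::nat) \<xi> \<eta>. (\<forall>i<n. contT (\<xi> i) \<and> contT (\<eta> i)) \<and>
    (\<forall>w\<in>circle. cmod (f w - (\<Sum>i<n. ipX (blaschke lam zs) (\<xi> i) (\<eta> i) w)) < e)"
proof -
  obtain \<eta> where "contT \<eta>" "\<And>w. w \<in> circle \<Longrightarrow> ipX (blaschke lam zs) (\<lambda>z. 1) \<eta> w = f w"
    using exists_ipX_one_eq[OF \<open>contT f\<close>] by blast
  moreover have "contT (\<lambda>z. 1)" by (simp add: contT_def)
  ultimately show ?thesis
    using \<open>e > 0\<close> by (intro exI[of _ 1] exI[of _ "\<lambda>i z. 1"] exI[of _ "\<lambda>i. \<eta>"]) simp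
qed

end

theorem proposition3p1:
  fixes R :: "complex \<Rightarrow> complex"
  assumes "is_finite_blaschke R"
  shows
    \<comment> \<open>the inner product is C(T)-valued\<close>
    "(\<forall>\<xi> \<eta>. contT \<xi> \<longrightarrow> contT \<eta> \<longrightarrow> contT (ipX R \<xi> \<eta>))
     \<comment> \<open>right action preserves X_R and inner product is right A-linear\<close>
   \<and> (\<forall>\<xi> b. contT \<xi> \<longrightarrow> contT b \<longrightarrow> contT (ract R \<xi> b))
   \<and> (\<forall>\<xi> \<eta> b. contT \<xi> \<longrightarrow> contT \<eta> \<longrightarrow> contT b \<longrightarrow>
        (\<forall>w\<in>circle. ipX R \<xi> (ract R \<eta> b) w = ipX R \<xi> \<eta> w * b w))
     \<comment> \<open>positivity and definiteness\<close>
   \<and> (\<forall>\<xi>. contT \<xi> \<longrightarrow> (\<forall>w\<in>circle. Im (ipX R \<xi> \<xi> w) = 0 \<and> Re (ipX R \<xi> \<xi> w) \<ge> 0))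
   \<and> (\<forall>\<xi>. contT \<xi> \<longrightarrow> (\<forall>w\<in>circle. ipX R \<xi> \<xi> w = 0) \<longrightarrow> (\<forall>z\<in>circle. \<xi> z = 0))
     \<comment> \<open>completeness w.r.t. norm2, without completion\<close>
   \<and> (\<forall>x :: nat \<Rightarrow> complex \<Rightarrow> complex. (\<forall>n. contT (x n)) \<longrightarrow>
        (\<forall>e>0. \<exists>N. \<forall>m\<ge>N. \<forall>n\<ge>N. norm2 R (\<lambda>z. x m z - x n z) < e) \<longrightarrow>
        (\<exists>y. contT y \<and> (\<lambda>n. norm2 R (\<lambda>z. x n z - y z)) \<longlonglongrightarrow> 0))
     \<comment> \<open>fullness: span of inner products is dense in C(T)\<close>
   \<and> (\<forall>f. contT f \<longrightarrow> (\<forall>e>0. \<exists>(n::nat) \<xi> \<eta>. (\<forall>i<n. contT (\<xi> i) \<and> contT (\<eta> i)) \<and>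
        (\<forall>w\<in>circle. cmod (f w - (\<Sum>i<n. ipX R (\<xi> i) (\<eta> i) w)) < e)))
     \<comment> \<open>left action preserves X_R and is adjointable with adjoint phi(conj a)\<close>
   \<and> (\<forall>a \<xi>. contT a \<longrightarrow> contT \<xi> \<longrightarrow> contT (lact a \<xi>))
   \<and> (\<forall>a \<xi> \<eta>. contT a \<longrightarrow> contT \<xi> \<longrightarrow> contT \<eta> \<longrightarrow>
        (\<forall>w\<in>circle. ipX R (lact a \<xi>) \<eta> w = ipX R \<xi> (lact (\<lambda>z. cnj (a z)) \<eta>) w))
     \<comment> \<open>phi is unital\<close>
   \<and> (\<forall>\<xi>. lact (\<lambda>z. 1) \<xi> = \<xi>)
     \<comment> \<open>phi is faithful\<close>
   \<and> (\<forall>a. contT a \<longrightarrow> (\<forall>\<xi>. contT \<xi> \<longrightarrow> (\<forall>z\<in>circle. lact a \<xi> z = 0)) \<longrightarrow>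
        (\<forall>z\<in>circle. a z = 0))"
proof -
  obtain lam zs where "finite_blaschke lam zs" and R: "R = blaschke lam zs"
    using assms unfolding is_finite_blaschke_def finite_blaschke_def by blast
  then interpret finite_blaschke lam zs by simp
  have one: "contT (\<lambda>z. 1)" by (simp add: contT_def)
  show ?thesis
    unfolding R
  proof (intro conjI allI impI ballI)
    show "\<xi> z = 0" if "\<forall>w\<in>circle. ipX (blaschke lam zs) \<xi> \<xi> w = 0" "z \<in> circle" for \<xi> z
      using that by (rule ipX_self_zero_imp_zero)
    show "\<exists>y. contT y \<and> (\<lambda>n. norm2 (blaschke lam zs) (\<lambda>z. x n z - y z)) \<longlonglongrightarrow> 0"
      if "\<forall>n. contT (x n)"
        "\<forall>e>0. \<exists>N. \<forall>m\<ge>N. \<forall>n\<ge>N. norm2 (blaschke lam zs) (\<lambda>z. x m z - x n z) < e" for x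
      by (rule norm2_Cauchy_converges[of x]) (use that in auto)
    show "a z = 0" if "\<forall>\<xi>. contT \<xi> \<longrightarrow> (\<forall>z\<in>circle. lact a \<xi> z = 0)" "z \<in> circle" for a z
      using that one by (metis lact_def mult_cancel_left1)
  qed (simp_all add: dense_span_ipX contT_ipX contT_ract ipX_ract ipX_lact ipX_self sum_nonneg,
       simp_all add: contT_def lact_def continuous_on_mult)
qed

end
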